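(* Let $G = (\mathbb{Z}/2\mathbb{Z})^n$, $N = 2^n$, let $\epsilon \in (0,\tfrac12)$ and let $A \subseteq G$. Then there is a subgroup $H \leq G$ of index $|G/H| \leq W(\epsilon^{-3})$ which is $\epsilon$-regular for $A$.
   Context: For a subgroup $H \leq G$ and $g \in G$, let $A_H^{+g} \subseteq H$ be the set $\{x \in H : x + g \in A\}$. An element $g \in G$ is an $\epsilon$-regular value (with respect to $A$ and $H$) if for every nontrivial character $\chi$ of $H$ one has $\left|\sum_{x \in H} A_H^{+g}(x)\chi(x)\right| \leq \epsilon|H|$ (here $A_H^{+g}$ also denotes its indicator function on $H$). $H$ is $\epsilon$-regular for $A$ if the number of $g \in G$ which are not $\epsilon$-regular values is at most $\epsilon N$. $W(t)$ denotes a tower of twos of height $\lceil t\rceil$ ($W(t) = w_{\lceil t \rceil}$ with $w_0 = 1$, $w_{h+1} = 2^{w_h}$). *)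

theory Defs
  imports Complex_Main
begin

text \<open>The group G = (Z/2Z)^n, realised as functions nat => bool vanishing (False) outside {0..<n},
  with addition = pointwise exclusive or.\<close>

definition cube :: "nat \<Rightarrow> (nat \<Rightarrow> bool) set" where
  "cube n = {x. \<forall>i\<ge>n. \<not> x i}"

definition vadd :: "(nat \<Rightarrow> bool) \<Rightarrow> (nat \<Rightarrow> bool) \<Rightarrow> (nat \<Rightarrow> bool)" where
  "vadd x y = (\<lambda>i. x i \<noteq> y i)"

definition vzero :: "nat \<Rightarrow> bool" where
  "vzero = (\<lambda>_. False)"

text \<open>H is a subgroup of G (in characteristic 2, closure under addition plus 0 suffices).\<close>
definition is_subgroup :: "nat \<Rightarrow> (nat \<Rightarrow> bool) set \<Rightarrow> bool" where
  "is_subgroup n H \<longleftrightarrow> H \<subseteq> cube n \<and> vzero \<in> H \<and> (\<forall>x\<in>H. \<forall>y\<in>H. vadd x y \<in> H)"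

definition sg_index :: "nat \<Rightarrow> (nat \<Rightarrow> bool) set \<Rightarrow> real" where
  "sg_index n H = real (card (cube n)) / real (card H)"

text \<open>A character of H: a homomorphism from H to the unit circle (values off H are irrelevant).\<close>
definition is_character :: "(nat \<Rightarrow> bool) set \<Rightarrow> ((nat \<Rightarrow> bool) \<Rightarrow> complex) \<Rightarrow> bool" where
  "is_character H \<chi> \<longleftrightarrow> (\<forall>x\<in>H. cmod (\<chi> x) = 1) \<and>
     (\<forall>x\<in>H. \<forall>y\<in>H. \<chi> (vadd x y) = \<chi> x * \<chi> y)"

definition nontrivial_character :: "(nat \<Rightarrow> bool) set \<Rightarrow> ((nat \<Rightarrow> bool) \<Rightarrow> complex) \<Rightarrow> bool" where
  "nontrivial_character H \<chi> \<longleftrightarrow> is_character H \<chi> \<and> (\<exists>x\<in>H. \<chi> x \<noteq> 1)"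

definition shift_part :: "(nat \<Rightarrow> bool) set \<Rightarrow> (nat \<Rightarrow> bool) set \<Rightarrow> (nat \<Rightarrow> bool) \<Rightarrow> (nat \<Rightarrow> bool) set" where
  "shift_part A H g = {x\<in>H. vadd x g \<in> A}"

definition regular_value ::
  "real \<Rightarrow> (nat \<Rightarrow> bool) set \<Rightarrow> (nat \<Rightarrow> bool) set \<Rightarrow> (nat \<Rightarrow> bool) \<Rightarrow> bool" where
  "regular_value \<epsilon> A H g \<longleftrightarrow>
     (\<forall>\<chi>. nontrivial_character H \<chi> \<longrightarrow>
        cmod (\<Sum>x\<in>H. (if x \<in> shift_part A H g then 1 else 0) * \<chi> x) \<le> \<epsilon> * real (card H))"

definition eps_regular :: "nat \<Rightarrow> real \<Rightarrow> (nat \<Rightarrow> bool) set \<Rightarrow> (nat \<Rightarrow> bool) set \<Rightarrow> bool" where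
  "eps_regular n \<epsilon> A H \<longleftrightarrow>
     real (card {g\<in>cube n. \<not> regular_value \<epsilon> A H g}) \<le> \<epsilon> * 2 ^ n"

fun tower :: "nat \<Rightarrow> nat" where
  "tower 0 = 1"
| "tower (Suc h) = 2 ^ tower h"

definition W :: "real \<Rightarrow> nat" where
  "W t = tower (nat \<lceil>t\<rceil>)"

end

theory Submission
  imports Defs "HOL-Analysis.Convex" "HOL-Algebra.Coset"
begin

(* Energy increment.  For a subgroup H write d_H(g) = |A \<inter> (g + H)| / |H| and call the mean
   of d_H(g)^2 over G the energy of H; it lies in [0, 1].  A character of a subgroup of
   (Z/2Z)^n takes only the values 1 and -1, so a nontrivial character of H splits H into its
   kernel K and the complement H - K, of equal size, and its Fourier coefficient at g is the
   number of points of A in g + K minus the number in g + (H - K).  If H is not eps-regular,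
   pick for every coset of H containing an irregular value one witnessing character (the size
   of the coefficient is constant on cosets) and intersect H with their kernels.  The index
   grows at most from k to k 2^k.  Cauchy-Schwarz on the two halves g + K and g + (H - K)
   shows that the mean of d_H'^2 over g + H exceeds d_H(g)^2 by the squared normalised
   coefficient, hence by more than eps^2 at each of the more than eps N irregular values, so
   the energy grows by more than eps^3.  Starting from H = G, a regular subgroup is therefore
   reached after fewer than eps^-3 steps, and 2k <= 2^k keeps twice the index below a tower
   of twos of height ceil(eps^-3). *)

section \<open>The group (Z/2Z)^n and its subgroups\<close>

type_synonym vec = "nat \<Rightarrow> bool"

lemma vadd_comm: "vadd x y = vadd y x"
  by (auto simp: vadd_def fun_eq_iff)

lemma vadd_assoc: "vadd (vadd x y) z = vadd x (vadd y z)"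
  by (auto simp: vadd_def fun_eq_iff)

lemma vadd_self [simp]: "vadd x x = vzero"
  by (auto simp: vadd_def vzero_def fun_eq_iff)

lemma vadd_zero [simp]: "vadd x vzero = x" "vadd vzero x = x"
  by (auto simp: vadd_def vzero_def fun_eq_iff)

lemma vadd_vadd_cancel [simp]: "vadd (vadd x y) y = x"
  by (auto simp: vadd_def fun_eq_iff)

lemma vadd_left_cancel: "vadd x y = vadd z y \<longleftrightarrow> x = z"
  by (auto simp: vadd_def fun_eq_iff)

lemma vadd_in_cube: "x \<in> cube n \<Longrightarrow> y \<in> cube n \<Longrightarrow> vadd x y \<in> cube n"
  by (auto simp: vadd_def cube_def)

lemma cube_eq_image_Pow: "cube n = (\<lambda>S i. i \<in> S) ` Pow {..<n}"
proof -
  have "x \<in> (\<lambda>S i. i \<in> S) ` Pow {..<n}" if "x \<in> cube n" for x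
  proof
    show "x = (\<lambda>i. i \<in> {i. x i})" by simp
    show "{i. x i} \<in> Pow {..<n}" using that by (auto simp: cube_def not_less[symmetric])
  qed
  then show ?thesis by (auto simp: cube_def)
qed

lemma finite_cube [simp]: "finite (cube n)"
  by (simp add: cube_eq_image_Pow)

lemma card_cube: "card (cube n) = 2 ^ n"
proof -
  have "inj_on (\<lambda>S i. i \<in> S) (Pow {..<n})"
    by (auto simp: inj_on_def fun_eq_iff)
  then show ?thesis by (simp add: cube_eq_image_Pow card_image card_Pow)
qed

lemma vzero_in_cube: "vzero \<in> cube n"
  by (simp add: vzero_def cube_def)

lemma is_subgroup_cube: "is_subgroup n (cube n)"
  by (simp add: is_subgroup_def vzero_in_cube vadd_in_cube)

lemma is_subgroup_Int: "is_subgroup n H \<Longrightarrow> is_subgroup n K \<Longrightarrow> is_subgroup n (H \<inter> K)"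
  unfolding is_subgroup_def by blast

lemma is_subgroup_finite: "is_subgroup n H \<Longrightarrow> finite H"
  unfolding is_subgroup_def using finite_subset finite_cube by blast

lemma is_subgroup_card_pos: "is_subgroup n H \<Longrightarrow> 0 < card H"
  using is_subgroup_finite unfolding is_subgroup_def by (auto simp: card_gt_0_iff)

lemma sum_vadd_reindex:
  assumes "\<forall>x\<in>S. vadd x y \<in> S"
  shows "(\<Sum>x\<in>S. f (vadd x y)) = (\<Sum>x\<in>S. f x)"
  by (rule sum.reindex_bij_witness[where i="\<lambda>x. vadd x y" and j="\<lambda>x. vadd x y"]) (use assms in auto)

definition cube_group :: "nat \<Rightarrow> vec monoid" where
  "cube_group n = \<lparr>carrier = cube n, mult = vadd, one = vzero\<rparr>"

lemma cube_group_simps [simp]: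
  "carrier (cube_group n) = cube n" "mult (cube_group n) = vadd" "one (cube_group n) = vzero"
  by (simp_all add: cube_group_def)

lemma group_cube_group: "group (cube_group n)"
proof (rule groupI)
  show "\<exists>y\<in>carrier (cube_group n). y \<otimes>\<^bsub>cube_group n\<^esub> x = \<one>\<^bsub>cube_group n\<^esub>"
    if "x \<in> carrier (cube_group n)" for x
    using that by (intro bexI[of _ x]) simp_all
qed (auto simp: vadd_in_cube vadd_assoc vzero_in_cube)

lemma subgroup_cube_group:
  assumes "is_subgroup n H"
  shows "subgroup H (cube_group n)"
proof -
  interpret group "cube_group n" by (rule group_cube_group)
  have inv_self: "inv\<^bsub>cube_group n\<^esub> x = x" if "x \<in> cube n" for x
    using that by (intro inv_equality) simp_all
  show ?thesis
    using assms by (intro subgroupI) (auto simp: is_subgroup_def inv_self)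
qed

lemma r_coset_cube_group: "H #>\<^bsub>cube_group n\<^esub> g = (\<lambda>h. vadd h g) ` H"
  by (auto simp: r_coset_def)

definition subgroup_index :: "nat \<Rightarrow> vec set \<Rightarrow> nat" where
  "subgroup_index n H = card (rcosets\<^bsub>cube_group n\<^esub> H)"

lemma card_cube_eq_index_mult_card:
  assumes "is_subgroup n H"
  shows "2 ^ n = subgroup_index n H * card H"
  using group.lagrange[OF group_cube_group subgroup_cube_group[OF assms]]
  by (simp add: subgroup_index_def order_def card_cube)

lemma subgroup_index_cube: "subgroup_index n (cube n) = 1"
  using card_cube_eq_index_mult_card[OF is_subgroup_cube, of n] by (simp add: card_cube)

section \<open>Characters of subgroups\<close>

lemma character_vzero:
  assumes "is_character H \<chi>" "vzero \<in> H"
  shows "\<chi> vzero = 1"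
proof -
  have "\<chi> vzero * \<chi> vzero = \<chi> vzero * 1"
    using assms unfolding is_character_def by (metis mult_1_right vadd_zero(1))
  moreover have "\<chi> vzero \<noteq> 0"
    using assms unfolding is_character_def by force
  ultimately show ?thesis
    by (metis mult_left_cancel)
qed

lemma character_values:
  assumes "is_character H \<chi>" "is_subgroup n H" "x \<in> H"
  shows "\<chi> x = 1 \<or> \<chi> x = -1"
proof -
  have "\<chi> x * \<chi> x = \<chi> vzero"
    using assms unfolding is_character_def by (metis vadd_self)
  also have "\<dots> = 1"
    using character_vzero assms unfolding is_subgroup_def by blast
  finally show ?thesis
    using square_eq_1_iff by blast
qed

definition char_kernel :: "vec set \<Rightarrow> (vec \<Rightarrow> complex) \<Rightarrow> vec set" where
  "char_kernel H \<chi> = {x\<in>H. \<chi> x = 1}"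

lemma character_outside_kernel:
  assumes "is_character H \<chi>" "is_subgroup n H" "x \<in> H - char_kernel H \<chi>"
  shows "\<chi> x = -1"
  using character_values[OF assms(1,2)] assms(3) by (auto simp: char_kernel_def)

lemma
  assumes ch: "is_character H \<chi>" and sg: "is_subgroup n H"
  shows is_subgroup_char_kernel: "is_subgroup n (char_kernel H \<chi>)"
    and vadd_outside_outside_char_kernel:
      "x \<in> H - char_kernel H \<chi> \<Longrightarrow> y \<in> H - char_kernel H \<chi> \<Longrightarrow> vadd x y \<in> char_kernel H \<chi>"
    and vadd_outside_inside_char_kernel:
      "x \<in> H - char_kernel H \<chi> \<Longrightarrow> y \<in> char_kernel H \<chi> \<Longrightarrow> vadd x y \<in> H - char_kernel H \<chi>"
proof -
  have mult: "\<chi> (vadd x y) = \<chi> x * \<chi> y" if "x \<in> H" "y \<in> H" for x y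
    using that ch unfolding is_character_def by blast
  have closed: "vadd x y \<in> H" if "x \<in> H" "y \<in> H" for x y
    using that sg unfolding is_subgroup_def by blast
  have minus_one: "\<chi> x = -1" if "x \<in> H - char_kernel H \<chi>" for x
    by (rule character_outside_kernel[OF ch sg that])
  have "vzero \<in> H" "H \<subseteq> cube n"
    using sg unfolding is_subgroup_def by blast+
  then show "is_subgroup n (char_kernel H \<chi>)"
    using character_vzero[OF ch] mult closed unfolding is_subgroup_def char_kernel_def by auto
  show "vadd x y \<in> char_kernel H \<chi>" if "x \<in> H - char_kernel H \<chi>" "y \<in> H - char_kernel H \<chi>"
    using that mult[of x y] closed[of x y] minus_one[OF that(1)] minus_one[OF that(2)]
    by (simp add: char_kernel_def)
  show "vadd x y \<in> H - char_kernel H \<chi>" if "x \<in> H - char_kernel H \<chi>" "y \<in> char_kernel H \<chi>"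
    using that mult[of x y] closed[of x y] minus_one[OF that(1)] by (simp add: char_kernel_def)
qed

lemma card_char_kernel:
  assumes nt: "nontrivial_character H \<chi>" and sg: "is_subgroup n H"
  shows "card (char_kernel H \<chi>) = card (H - char_kernel H \<chi>)"
proof -
  have ch: "is_character H \<chi>"
    using nt by (simp add: nontrivial_character_def)
  obtain h where h: "h \<in> H - char_kernel H \<chi>"
    using nt by (auto simp: nontrivial_character_def char_kernel_def)
  have "bij_betw (\<lambda>x. vadd x h) (char_kernel H \<chi>) (H - char_kernel H \<chi>)"
  proof (rule bij_betw_byWitness[where f'="\<lambda>x. vadd x h"])
    show "(\<lambda>x. vadd x h) ` char_kernel H \<chi> \<subseteq> H - char_kernel H \<chi>"
      using vadd_outside_inside_char_kernel[OF ch sg h] by (auto simp: vadd_comm)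
    show "(\<lambda>x. vadd x h) ` (H - char_kernel H \<chi>) \<subseteq> char_kernel H \<chi>"
      using vadd_outside_outside_char_kernel[OF ch sg _ h] by auto
  qed simp_all
  then show ?thesis
    by (rule bij_betw_same_card)
qed

definition fourier_coeff :: "vec set \<Rightarrow> vec set \<Rightarrow> vec \<Rightarrow> (vec \<Rightarrow> complex) \<Rightarrow> complex" where
  "fourier_coeff A H g \<chi> = (\<Sum>x\<in>H. (if x \<in> shift_part A H g then 1 else 0) * \<chi> x)"

lemma regular_value_iff:
  "regular_value \<epsilon> A H g \<longleftrightarrow>
     (\<forall>\<chi>. nontrivial_character H \<chi> \<longrightarrow> cmod (fourier_coeff A H g \<chi>) \<le> \<epsilon> * card H)"
  by (simp add: regular_value_def fourier_coeff_def)

lemma norm_fourier_coeff_shift: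
  assumes sg: "is_subgroup n H" and ch: "is_character H \<chi>" and h: "h \<in> H"
  shows "cmod (fourier_coeff A H (vadd h g) \<chi>) = cmod (fourier_coeff A H g \<chi>)"
proof -
  have closed: "\<forall>x\<in>H. vadd x h \<in> H"
    using sg h by (simp add: is_subgroup_def)
  have mult: "\<chi> (vadd x h) = \<chi> h * \<chi> x" if "x \<in> H" for x
    using ch that h by (simp add: is_character_def)
  have "fourier_coeff A H (vadd h g) \<chi> = (\<Sum>x\<in>H. of_bool (vadd x (vadd h g) \<in> A) * \<chi> x)"
    by (simp add: fourier_coeff_def shift_part_def of_bool_def)
  also have "\<dots> = (\<Sum>x\<in>H. of_bool (vadd (vadd x h) (vadd h g) \<in> A) * \<chi> (vadd x h))"
    by (rule sum_vadd_reindex[OF closed, symmetric])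
  also have "\<dots> = \<chi> h * fourier_coeff A H g \<chi>"
  proof -
    have "vadd (vadd x h) (vadd h g) = vadd x g" for x
      by (auto simp: vadd_def fun_eq_iff)
    then show ?thesis
      by (simp add: fourier_coeff_def shift_part_def of_bool_def sum_distrib_left mult mult.left_commute
          cong: sum.cong)
  qed
  finally show ?thesis
    using ch h by (simp add: norm_mult is_character_def)
qed

definition shift_count :: "vec set \<Rightarrow> vec set \<Rightarrow> vec \<Rightarrow> real" where
  "shift_count A S g = (\<Sum>x\<in>S. of_bool (vadd x g \<in> A))"

lemma fourier_coeff_eq_shift_count_diff:
  assumes nt: "nontrivial_character H \<chi>" and sg: "is_subgroup n H"
  shows "fourier_coeff A H g \<chi>
           = complex_of_real (shift_count A (char_kernel H \<chi>) g - shift_count A (H - char_kernel H \<chi>) g)"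
proof -
  let ?K = "char_kernel H \<chi>"
  have ch: "is_character H \<chi>"
    using nt by (simp add: nontrivial_character_def)
  have "fourier_coeff A H g \<chi> = (\<Sum>x\<in>H. of_bool (vadd x g \<in> A) * \<chi> x)"
    by (simp add: fourier_coeff_def shift_part_def of_bool_def)
  also have "\<dots> = (\<Sum>x\<in>H - ?K. of_bool (vadd x g \<in> A) * \<chi> x) + (\<Sum>x\<in>?K. of_bool (vadd x g \<in> A) * \<chi> x)"
    by (rule sum.subset_diff) (auto simp: char_kernel_def is_subgroup_finite[OF sg])
  also have "\<dots> = - (\<Sum>x\<in>H - ?K. of_bool (vadd x g \<in> A)) + (\<Sum>x\<in>?K. of_bool (vadd x g \<in> A))"
  proof -
    have "(\<Sum>x\<in>H - ?K. of_bool (vadd x g \<in> A) * \<chi> x) = (\<Sum>x\<in>H - ?K. - of_bool (vadd x g \<in> A))"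
      by (rule sum.cong) (simp_all add: character_outside_kernel[OF ch sg])
    moreover have "(\<Sum>x\<in>?K. of_bool (vadd x g \<in> A) * \<chi> x) = (\<Sum>x\<in>?K. of_bool (vadd x g \<in> A))"
      by (rule sum.cong) (simp_all add: char_kernel_def)
    ultimately show ?thesis
      by (simp add: sum_negf)
  qed
  finally have "fourier_coeff A H g \<chi>
      = (\<Sum>x\<in>?K. of_bool (vadd x g \<in> A)) - (\<Sum>x\<in>H - ?K. of_bool (vadd x g \<in> A))"
    by simp
  moreover have "complex_of_real (of_bool P) = of_bool P" for P
    by (cases P) simp_all
  ultimately show ?thesis
    by (simp add: shift_count_def of_real_sum)
qed

section \<open>Densities and energy\<close>

definition density :: "vec set \<Rightarrow> vec set \<Rightarrow> vec \<Rightarrow> real" where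
  "density A H g = shift_count A H g / card H"

definition energy :: "nat \<Rightarrow> vec set \<Rightarrow> vec set \<Rightarrow> real" where
  "energy n A H = (\<Sum>g\<in>cube n. (density A H g)\<^sup>2) / 2 ^ n"

lemma density_bounds: "0 \<le> density A H g" "density A H g \<le> 1"
proof -
  have "0 \<le> shift_count A H g" "shift_count A H g \<le> card H"
    unfolding shift_count_def using sum_mono[of H "\<lambda>x. of_bool (vadd x g \<in> A)" "\<lambda>_. 1 :: real"]
    by (auto intro: sum_nonneg)
  then show "0 \<le> density A H g" "density A H g \<le> 1"
    by (auto simp: density_def divide_le_eq_1)
qed

lemma energy_nonneg: "0 \<le> energy n A H"
  by (simp add: energy_def sum_nonneg)

lemma energy_le_one: "energy n A H \<le> 1"
proof -
  have "(\<Sum>g\<in>cube n. (density A H g)\<^sup>2) \<le> (\<Sum>g\<in>cube n. 1)"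
    using density_bounds by (intro sum_mono) (simp add: power_le_one)
  then show ?thesis
    by (simp add: energy_def card_cube)
qed

lemma sum_density_shift:
  assumes sg: "is_subgroup n H" and "finite S" and closed: "\<forall>x\<in>S. \<forall>h\<in>H. vadd x h \<in> S"
  shows "(\<Sum>x\<in>S. density A H (vadd x g)) = shift_count A S g"
proof -
  have "(\<Sum>x\<in>S. shift_count A H (vadd x g)) = (\<Sum>h\<in>H. \<Sum>x\<in>S. of_bool (vadd (vadd x h) g \<in> A))"
  proof -
    have "vadd h (vadd x g) = vadd (vadd x h) g" for x h
      by (auto simp: vadd_def)
    then show ?thesis
      unfolding shift_count_def by (subst sum.swap) simp
  qed
  also have "\<dots> = (\<Sum>h\<in>H. shift_count A S g)"
    unfolding shift_count_def using closed by (intro sum.cong refl sum_vadd_reindex) blast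
  finally show ?thesis
    using is_subgroup_card_pos[OF sg] by (simp add: density_def flip: sum_divide_distrib)
qed

lemma sum_density_sq_eq_sum_average:
  assumes sg: "is_subgroup n H"
  shows "(\<Sum>g\<in>cube n. (density A H' g)\<^sup>2)
           = (\<Sum>g\<in>cube n. (\<Sum>x\<in>H. (density A H' (vadd x g))\<^sup>2) / card H)"
proof -
  have "(\<Sum>g\<in>cube n. (density A H' (vadd x g))\<^sup>2) = (\<Sum>g\<in>cube n. (density A H' g)\<^sup>2)" if "x \<in> H" for x
    using sg that unfolding is_subgroup_def
    by (subst sum_vadd_reindex[of _ x, symmetric]) (auto simp: vadd_in_cube vadd_comm)
  then have "(\<Sum>x\<in>H. \<Sum>g\<in>cube n. (density A H' (vadd x g))\<^sup>2) = card H * (\<Sum>g\<in>cube n. (density A H' g)\<^sup>2)"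
    by simp
  then show ?thesis
    using is_subgroup_card_pos[OF sg] by (simp add: sum.swap[of _ H] flip: sum_divide_distrib)
qed

lemma density_sq_le_average:
  assumes sg: "is_subgroup n H" and sg': "is_subgroup n H'" and "H' \<subseteq> H"
  shows "(density A H g)\<^sup>2 \<le> (\<Sum>x\<in>H. (density A H' (vadd x g))\<^sup>2) / card H"
proof -
  have "\<forall>x\<in>H. \<forall>h\<in>H'. vadd x h \<in> H"
    using sg \<open>H' \<subseteq> H\<close> unfolding is_subgroup_def by blast
  then have "shift_count A H g = (\<Sum>x\<in>H. density A H' (vadd x g))"
    by (simp add: sum_density_shift[OF sg' is_subgroup_finite[OF sg]])
  then have "(shift_count A H g)\<^sup>2 \<le> (\<Sum>x\<in>H. (density A H' (vadd x g))\<^sup>2) * card H"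
    by (simp add: sum_squared_le_sum_of_squares)
  then show ?thesis
    using is_subgroup_card_pos[OF sg] by (simp add: density_def power_divide field_simps power2_eq_square)
qed

lemma mean_square_two_halves:
  fixes f :: "'a \<Rightarrow> real"
  assumes "finite S" "finite T" "S \<inter> T = {}" "card T = card S"
  shows "((sum f S + sum f T) / (2 * card S))\<^sup>2 + ((sum f S - sum f T) / (2 * card S))\<^sup>2
           \<le> (\<Sum>x\<in>S \<union> T. (f x)\<^sup>2) / (2 * card S)"
proof (cases "card S = 0")
  case False
  define m where "m = real (card S)"
  have "m > 0"
    using False by (simp add: m_def)
  have "(sum f S)\<^sup>2 \<le> m * (\<Sum>x\<in>S. (f x)\<^sup>2)" "(sum f T)\<^sup>2 \<le> m * (\<Sum>x\<in>T. (f x)\<^sup>2)"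
    using sum_squared_le_sum_of_squares[of f S] sum_squared_le_sum_of_squares[of f T] assms(4)
    by (simp_all add: m_def mult.commute)
  then have "(sum f S)\<^sup>2 + (sum f T)\<^sup>2 \<le> m * (\<Sum>x\<in>S \<union> T. (f x)\<^sup>2)"
    using assms(1-3) by (simp add: sum.union_disjoint distrib_left)
  then have "((sum f S)\<^sup>2 + (sum f T)\<^sup>2) / (2 * m\<^sup>2) \<le> m * (\<Sum>x\<in>S \<union> T. (f x)\<^sup>2) / (2 * m\<^sup>2)"
    by (rule divide_right_mono) simp
  also have "\<dots> = (\<Sum>x\<in>S \<union> T. (f x)\<^sup>2) / (2 * m)"
    using \<open>m > 0\<close> by (simp add: power2_eq_square)
  finally have "((sum f S)\<^sup>2 + (sum f T)\<^sup>2) / (2 * m\<^sup>2) \<le> (\<Sum>x\<in>S \<union> T. (f x)\<^sup>2) / (2 * m)" .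
  moreover have "((sum f S + sum f T) / (2 * m))\<^sup>2 + ((sum f S - sum f T) / (2 * m))\<^sup>2
      = ((sum f S)\<^sup>2 + (sum f T)\<^sup>2) / (2 * m\<^sup>2)"
    using \<open>m > 0\<close> by (simp add: field_simps power2_eq_square)
  ultimately show ?thesis
    by (simp add: m_def)
qed simp

lemma density_sq_add_coeff_sq_le_average:
  assumes sg: "is_subgroup n H" and nt: "nontrivial_character H \<chi>"
    and sg': "is_subgroup n H'" and sub: "H' \<subseteq> char_kernel H \<chi>"
  shows "(density A H g)\<^sup>2 + (cmod (fourier_coeff A H g \<chi>) / card H)\<^sup>2
           \<le> (\<Sum>x\<in>H. (density A H' (vadd x g))\<^sup>2) / card H"
proof -
  let ?K = "char_kernel H \<chi>"
  let ?a = "shift_count A ?K g" and ?b = "shift_count A (H - ?K) g"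
  define f where "f x = density A H' (vadd x g)" for x
  have ch: "is_character H \<chi>"
    using nt by (simp add: nontrivial_character_def)
  have finH: "finite H"
    by (rule is_subgroup_finite[OF sg])
  have KH: "?K \<subseteq> H"
    by (auto simp: char_kernel_def)
  have card_H: "card H = 2 * card ?K"
    using card_char_kernel[OF nt sg] card_Diff_subset[OF finite_subset[OF KH finH] KH]
      card_mono[OF finH KH] by simp
  have "\<forall>x\<in>?K. \<forall>h\<in>H'. vadd x h \<in> ?K"
    using is_subgroup_char_kernel[OF ch sg] sub unfolding is_subgroup_def by blast
  then have sum_K: "sum f ?K = ?a"
    unfolding f_def using finH KH by (intro sum_density_shift[OF sg']) (auto intro: finite_subset)
  have "\<forall>x\<in>H - ?K. \<forall>h\<in>H'. vadd x h \<in> H - ?K"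
    using vadd_outside_inside_char_kernel[OF ch sg] sub by blast
  then have sum_rest: "sum f (H - ?K) = ?b"
    unfolding f_def using finH by (intro sum_density_shift[OF sg']) auto
  have shift_count_H: "shift_count A H g = ?a + ?b"
    unfolding shift_count_def by (simp add: sum.subset_diff[OF KH finH])
  have cmod_eq: "cmod (fourier_coeff A H g \<chi>) = \<bar>?a - ?b\<bar>"
    by (simp only: fourier_coeff_eq_shift_count_diff[OF nt sg] norm_of_real)
  have "((?a + ?b) / (2 * card ?K))\<^sup>2 + ((?a - ?b) / (2 * card ?K))\<^sup>2 \<le> (\<Sum>x\<in>H. (f x)\<^sup>2) / (2 * card ?K)"
    using mean_square_two_halves[of ?K "H - ?K" f] finH KH card_char_kernel[OF nt sg]
    unfolding sum_K sum_rest by (simp add: finite_subset Un_absorb1[OF KH])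
  then show ?thesis
    unfolding density_def shift_count_H cmod_eq card_H f_def by (simp add: power_divide)
qed

section \<open>The energy increment\<close>

lemma card_le_double_card_Int:
  assumes closed: "\<forall>x\<in>L. \<forall>y\<in>L. vadd x y \<in> L" and "finite L"
    and index_two: "\<forall>x\<in>L - K. \<forall>y\<in>L - K. vadd x y \<in> K"
  shows "card L \<le> 2 * card (L \<inter> K)"
proof -
  have "card (L - K) \<le> card (L \<inter> K)"
  proof (cases "L - K = {}")
    case True
    show ?thesis
      by (simp add: True)
  next
    case False
    then obtain y where y: "y \<in> L - K"
      by blast
    have "inj_on (\<lambda>x. vadd x y) (L - K)"
      by (auto simp: inj_on_def vadd_left_cancel)
    moreover have "(\<lambda>x. vadd x y) ` (L - K) \<subseteq> L \<inter> K"
      using closed index_two y by blast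
    ultimately show ?thesis
      using \<open>finite L\<close> by (intro card_inj_on_le) auto
  qed
  then show ?thesis
    using card_Int_Diff[OF \<open>finite L\<close>, of K] by simp
qed

lemma card_le_pow_card_Inter:
  assumes sg: "is_subgroup n H" and "finite X"
    and X: "\<forall>K\<in>X. is_subgroup n K \<and> (\<forall>x\<in>H - K. \<forall>y\<in>H - K. vadd x y \<in> K)"
  shows "is_subgroup n (H \<inter> \<Inter>X) \<and> card H \<le> 2 ^ card X * card (H \<inter> \<Inter>X)"
  using \<open>finite X\<close> X
proof (induction X rule: finite_induct)
  case empty
  then show ?case
    using sg by simp
next
  case (insert K X)
  define L where "L = H \<inter> \<Inter>X"
  have L: "is_subgroup n L" "card H \<le> 2 ^ card X * card L"
    using insert by (auto simp: L_def)
  have "card L \<le> 2 * card (L \<inter> K)"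
    using L(1) insert.prems by (intro card_le_double_card_Int)
      (auto simp: is_subgroup_def is_subgroup_finite L_def)
  then have "card H \<le> 2 ^ card (insert K X) * card (L \<inter> K)"
    using L(2) insert.hyps by (simp add: order_trans)
  moreover have "H \<inter> \<Inter>(insert K X) = L \<inter> K"
    by (auto simp: L_def)
  ultimately show ?case
    using is_subgroup_Int L(1) insert.prems by auto
qed

lemma subgroup_index_le_of_card_le:
  assumes "is_subgroup n H" "is_subgroup n H'" "card H \<le> c * card H'"
  shows "subgroup_index n H' \<le> subgroup_index n H * c"
proof -
  have "subgroup_index n H' * card H' \<le> subgroup_index n H * c * card H'"
    using assms card_cube_eq_index_mult_card[of n] by (metis mult.assoc mult_le_mono2)
  then show ?thesis
    using is_subgroup_card_pos[OF assms(2)] by simp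
qed

lemma irregular_coset_witness:
  assumes sg: "is_subgroup n H" and C: "C \<in> rcosets\<^bsub>cube_group n\<^esub> H"
    and g: "g \<in> C" "\<not> regular_value \<epsilon> A H g"
  shows "\<exists>\<chi>. nontrivial_character H \<chi> \<and> (\<forall>g'\<in>C. \<epsilon> * card H < cmod (fourier_coeff A H g' \<chi>))"
proof -
  interpret group "cube_group n"
    by (rule group_cube_group)
  obtain \<chi> where \<chi>: "nontrivial_character H \<chi>" "\<epsilon> * card H < cmod (fourier_coeff A H g \<chi>)"
    using g(2) by (auto simp: regular_value_iff not_le)
  obtain a where a: "a \<in> cube n" "C = H #>\<^bsub>cube_group n\<^esub> a"
    using C by (auto simp: RCOSETS_def)
  then have "C = H #>\<^bsub>cube_group n\<^esub> g"
    using repr_independence[of g H a] g(1) subgroup_cube_group[OF sg] by simp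
  then have "\<exists>h\<in>H. g' = vadd h g" if "g' \<in> C" for g'
    using that by (auto simp: r_coset_cube_group)
  then show ?thesis
    using \<chi> norm_fourier_coeff_shift[OF sg] unfolding nontrivial_character_def by metis
qed

lemma refinement_killing_witnesses:
  assumes sg: "is_subgroup n H"
  shows "\<exists>H'. is_subgroup n H' \<and> H' \<subseteq> H
    \<and> subgroup_index n H' \<le> subgroup_index n H * 2 ^ subgroup_index n H
    \<and> (\<forall>g\<in>cube n. \<not> regular_value \<epsilon> A H g \<longrightarrow> (\<exists>\<chi>. nontrivial_character H \<chi>
          \<and> H' \<subseteq> char_kernel H \<chi> \<and> \<epsilon> * card H < cmod (fourier_coeff A H g \<chi>)))"
proof -
  let ?G = "cube_group n"
  interpret group ?G
    by (rule group_cube_group)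
  define witness where "witness C \<chi> \<longleftrightarrow>
      nontrivial_character H \<chi> \<and> (\<forall>g\<in>C. \<epsilon> * card H < cmod (fourier_coeff A H g \<chi>))" for C \<chi>
  define bad where "bad = {C \<in> rcosets\<^bsub>?G\<^esub> H. \<exists>g\<in>C. \<not> regular_value \<epsilon> A H g}"
  define X where "X = (\<lambda>C. char_kernel H (SOME \<chi>. witness C \<chi>)) ` bad"
  have witness: "witness C (SOME \<chi>. witness C \<chi>)" if "C \<in> bad" for C
  proof -
    have "\<exists>\<chi>. witness C \<chi>"
      using irregular_coset_witness[OF sg] that unfolding bad_def witness_def by blast
    then show ?thesis
      by (rule someI_ex)
  qed
  have "rcosets\<^bsub>?G\<^esub> H \<subseteq> Pow (cube n)"
    using rcosets_part_G subgroup_cube_group[OF sg] by auto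
  then have "finite (rcosets\<^bsub>?G\<^esub> H)"
    by (rule finite_subset) simp
  then have "finite X" "card X \<le> subgroup_index n H"
    unfolding X_def subgroup_index_def bad_def
    by (auto intro: card_image_le[THEN order_trans] card_mono)
  moreover have "\<forall>K\<in>X. is_subgroup n K \<and> (\<forall>x\<in>H - K. \<forall>y\<in>H - K. vadd x y \<in> K)"
    using witness is_subgroup_char_kernel[OF _ sg] vadd_outside_outside_char_kernel[OF _ sg]
    unfolding X_def witness_def nontrivial_character_def by blast
  ultimately have H': "is_subgroup n (H \<inter> \<Inter>X)" "card H \<le> 2 ^ subgroup_index n H * card (H \<inter> \<Inter>X)"
    using card_le_pow_card_Inter[OF sg, of X]
      mult_le_mono1[OF power_increasing[of "card X" "subgroup_index n H" "2::nat"]]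
    by (auto intro: order_trans)
  moreover have "\<exists>\<chi>. nontrivial_character H \<chi> \<and> H \<inter> \<Inter>X \<subseteq> char_kernel H \<chi>
      \<and> \<epsilon> * card H < cmod (fourier_coeff A H g \<chi>)" if "g \<in> cube n" "\<not> regular_value \<epsilon> A H g" for g
  proof -
    have "H #>\<^bsub>?G\<^esub> g \<in> bad"
      using that sg rcos_self[of g H] subgroup_cube_group[OF sg]
      unfolding bad_def by (auto simp: RCOSETS_def)
    moreover have "g \<in> H #>\<^bsub>?G\<^esub> g"
      using that rcos_self subgroup_cube_group[OF sg] by simp
    ultimately show ?thesis
      using witness unfolding witness_def X_def by blast
  qed
  moreover have "subgroup_index n (H \<inter> \<Inter>X) \<le> subgroup_index n H * 2 ^ subgroup_index n H"
    by (rule subgroup_index_le_of_card_le[OF sg H'])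
  ultimately show ?thesis
    by (intro exI[of _ "H \<inter> \<Inter>X"]) auto
qed

lemma energy_gain:
  fixes \<epsilon> :: real
  assumes sg: "is_subgroup n H" and sg': "is_subgroup n H'" and "H' \<subseteq> H" and "I \<subseteq> cube n"
    and "0 \<le> \<epsilon>"
    and witness: "\<forall>g\<in>I. \<exists>\<chi>. nontrivial_character H \<chi> \<and> H' \<subseteq> char_kernel H \<chi>
                      \<and> \<epsilon> * card H < cmod (fourier_coeff A H g \<chi>)"
  shows "energy n A H + card I * \<epsilon>\<^sup>2 / 2 ^ n \<le> energy n A H'"
proof -
  define gain where
    "gain g = (\<Sum>x\<in>H. (density A H' (vadd x g))\<^sup>2) / card H - (density A H g)\<^sup>2" for g
  have gain_nonneg: "0 \<le> gain g" for g
    using density_sq_le_average[OF sg sg' \<open>H' \<subseteq> H\<close>] by (simp add: gain_def)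
  have "\<epsilon>\<^sup>2 \<le> gain g" if g: "g \<in> I" for g
  proof -
    obtain \<chi> where \<chi>: "nontrivial_character H \<chi>" "H' \<subseteq> char_kernel H \<chi>"
      "\<epsilon> * card H < cmod (fourier_coeff A H g \<chi>)"
      using witness g by blast
    then have "\<epsilon> \<le> cmod (fourier_coeff A H g \<chi>) / card H"
      using is_subgroup_card_pos[OF sg] by (simp add: field_simps)
    then have "\<epsilon>\<^sup>2 \<le> (cmod (fourier_coeff A H g \<chi>) / card H)\<^sup>2"
      using \<open>0 \<le> \<epsilon>\<close> by (rule power_mono)
    then show ?thesis
      using density_sq_add_coeff_sq_le_average[OF sg \<chi>(1) sg' \<chi>(2), of A g] by (simp add: gain_def)
  qed
  then have "card I * \<epsilon>\<^sup>2 \<le> (\<Sum>g\<in>I. gain g)"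
    using sum_mono[of I "\<lambda>_. \<epsilon>\<^sup>2"] by simp
  also have "\<dots> \<le> (\<Sum>g\<in>cube n. gain g)"
    using \<open>I \<subseteq> cube n\<close> gain_nonneg by (intro sum_mono2) auto
  also have "\<dots> = 2 ^ n * energy n A H' - 2 ^ n * energy n A H"
    unfolding gain_def sum_subtractf sum_density_sq_eq_sum_average[OF sg, symmetric]
    by (simp add: energy_def)
  finally show ?thesis
    by (simp add: field_simps)
qed

lemma energy_increment:
  assumes sg: "is_subgroup n H" and "0 < \<epsilon>" and irregular: "\<not> eps_regular n \<epsilon> A H"
  shows "\<exists>H'. is_subgroup n H' \<and> subgroup_index n H' \<le> subgroup_index n H * 2 ^ subgroup_index n H
           \<and> energy n A H + \<epsilon> ^ 3 < energy n A H'"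
proof -
  define I where "I = {g\<in>cube n. \<not> regular_value \<epsilon> A H g}"
  obtain H' where H': "is_subgroup n H'" "H' \<subseteq> H"
      "subgroup_index n H' \<le> subgroup_index n H * 2 ^ subgroup_index n H"
      "\<forall>g\<in>I. \<exists>\<chi>. nontrivial_character H \<chi> \<and> H' \<subseteq> char_kernel H \<chi>
                 \<and> \<epsilon> * card H < cmod (fourier_coeff A H g \<chi>)"
    using refinement_killing_witnesses[OF sg, of \<epsilon> A] unfolding I_def by blast
  have "\<epsilon> * 2 ^ n < card I"
    using irregular by (simp add: eps_regular_def I_def)
  then have "\<epsilon> ^ 3 < card I * \<epsilon>\<^sup>2 / 2 ^ n"
    using \<open>0 < \<epsilon>\<close> by (simp add: field_simps power2_eq_square power3_eq_cube)
  also have "energy n A H + \<dots> \<le> energy n A H'"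
    using \<open>0 < \<epsilon>\<close> by (intro energy_gain[OF sg H'(1,2) _ _ H'(4)]) (auto simp: I_def)
  finally show ?thesis
    using H' by auto
qed

section \<open>Iteration\<close>

lemma double_le_pow2: "2 * k \<le> (2::nat) ^ k"
proof (induction k)
  case (Suc k)
  then show ?case
    by (cases "k = 0") (simp_all add: Suc_leI)
qed simp

lemma regularity_iteration:
  fixes \<epsilon> :: real
  assumes "0 < \<epsilon>"
  shows "\<exists>H. is_subgroup n H \<and> 2 * subgroup_index n H \<le> tower (Suc m)
           \<and> (eps_regular n \<epsilon> A H \<or> m * \<epsilon> ^ 3 \<le> energy n A H)"
proof (induction m)
  case 0
  show ?case
    using is_subgroup_cube subgroup_index_cube energy_nonneg by fastforce
next
  case (Suc m)
  then obtain H where H: "is_subgroup n H" "2 * subgroup_index n H \<le> tower (Suc m)"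
      "eps_regular n \<epsilon> A H \<or> m * \<epsilon> ^ 3 \<le> energy n A H"
    by blast
  show ?case
  proof (cases "eps_regular n \<epsilon> A H")
    case True
    have "tower (Suc m) \<le> tower (Suc (Suc m))"
      by (simp add: less_imp_le)
    then show ?thesis
      using H True by (meson order_trans)
  next
    case False
    define k where "k = subgroup_index n H"
    obtain H' where H': "is_subgroup n H'" "subgroup_index n H' \<le> k * 2 ^ k"
        "energy n A H + \<epsilon> ^ 3 < energy n A H'"
      using energy_increment[OF H(1) assms False] unfolding k_def by blast
    have "2 * subgroup_index n H' \<le> 2 * k * 2 ^ k"
      using H'(2) by simp
    also have "\<dots> \<le> 2 ^ k * 2 ^ k"
      using double_le_pow2 by (rule mult_right_mono) simp
    also have "\<dots> = 2 ^ (2 * k)"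
      by (simp add: mult_2 power_add)
    also have "\<dots> \<le> tower (Suc (Suc m))"
      using H(2) by (simp add: k_def power_increasing)
    finally show ?thesis
      using H'(1,3) H(3) False by (auto simp: algebra_simps)
  qed
qed

lemma eps_regular_subgroup_exists:
  fixes \<epsilon> :: real
  assumes "0 < \<epsilon>" and "1 \<le> Suc m * \<epsilon> ^ 3"
  shows "\<exists>H. is_subgroup n H \<and> 2 * subgroup_index n H \<le> tower (Suc m) \<and> eps_regular n \<epsilon> A H"
proof -
  obtain H where H: "is_subgroup n H" "2 * subgroup_index n H \<le> tower (Suc m)"
      "eps_regular n \<epsilon> A H \<or> m * \<epsilon> ^ 3 \<le> energy n A H"
    using regularity_iteration[OF \<open>0 < \<epsilon>\<close>] by blast
  have "eps_regular n \<epsilon> A H"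
  proof (rule ccontr)
    assume irregular: "\<not> eps_regular n \<epsilon> A H"
    then obtain H' where "energy n A H + \<epsilon> ^ 3 < energy n A H'"
      using energy_increment[OF H(1) \<open>0 < \<epsilon>\<close>] by blast
    then show False
      using H(3) irregular assms(2) energy_le_one[of n A H'] by (simp add: algebra_simps)
  qed
  then show ?thesis
    using H(1,2) by blast
qed

lemma sg_index_eq_subgroup_index: "is_subgroup n H \<Longrightarrow> sg_index n H = subgroup_index n H"
  using card_cube_eq_index_mult_card is_subgroup_card_pos by (simp add: sg_index_def card_cube)

theorem theorem2p1:
  fixes n :: nat and \<epsilon> :: real and A :: "(nat \<Rightarrow> bool) set"
  assumes "0 < \<epsilon>" and "\<epsilon> < 1/2" and "A \<subseteq> cube n"
  shows "\<exists>H. is_subgroup n H \<and> sg_index n H \<le> real (W (1 / \<epsilon> ^ 3)) \<and> eps_regular n \<epsilon> A H"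
proof -
  define m where "m = nat \<lceil>1 / \<epsilon> ^ 3\<rceil> - 1"
  have "0 < 1 / \<epsilon> ^ 3"
    using \<open>0 < \<epsilon>\<close> by simp
  then have m: "Suc m = nat \<lceil>1 / \<epsilon> ^ 3\<rceil>" "1 / \<epsilon> ^ 3 \<le> Suc m"
    by (auto simp: m_def le_of_int_ceiling)
  have "1 = 1 / \<epsilon> ^ 3 * \<epsilon> ^ 3"
    using \<open>0 < \<epsilon>\<close> by simp
  also have "\<dots> \<le> Suc m * \<epsilon> ^ 3"
    using m(2) \<open>0 < \<epsilon>\<close> by (intro mult_right_mono) simp_all
  finally obtain H where "is_subgroup n H" "2 * subgroup_index n H \<le> tower (Suc m)" "eps_regular n \<epsilon> A H"
    using eps_regular_subgroup_exists[OF \<open>0 < \<epsilon>\<close>] by blast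
  then show ?thesis
    using m(1) by (auto simp: W_def sg_index_eq_subgroup_index)
qed

end
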